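(* Let $k$ be a field of characteristic $0$, $n\ge 2$, and let $v$ be a discrete valuation of $K_n=k((X_1,\ldots,X_n))$ over $k$ (in the sense of the context) with value group $\mathbb{Z}$. Put $\alpha_i=v(X_i)$ for $i=1,\ldots,n$. Then, by means of a finite number of monoidal transformations (composed with permutations of the variables), one obtains $n$ elements $Y_1,\ldots,Y_n\in\widehat{K}_n$ (the new variables) such that $\hat v(Y_i)=\alpha=\gcd\{\alpha_1,\ldots,\alpha_n\}$ for all $i=1,\ldots,n$.
   Context: $R_n=k[[X_1,\ldots,X_n]]$ with maximal ideal $M_n=(X_1,\ldots,X_n)$ and quotient field $K_n$. A discrete valuation of $K_n\mid k$ means a rank-one discrete valuation $v$ of $K_n$, trivial on $k$, whose center $\mathfrak m_v\cap R_n$ in $R_n$ is $M_n$ (so $v>0$ on $M_n\setminus\{0\}$, $v\ge 0$ on $R_n$). $\widehat K_n$ denotes the completion of $K_n$ with respect to $v$ and $\hat v$ the extension of $v$ to it. A monoidal transformation is the injective homomorphism $k[[X_1,\ldots,X_n]]\to k[[Y_1,\ldots,Y_n]]$, $X_1\mapsto Y_1$, $X_2\mapsto Y_1Y_2$, $X_i\mapsto Y_i$ ($i\ge 3$), applied when $v(X_2)>v(X_1)$ (up to renumbering of variables); the new variables are identified with the elements $Y_1=X_1$, $Y_2=X_2/X_1$, $Y_i=X_i$ of $\widehat K_n$, and the procedure may be iterated. *)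

theory Defs
  imports Main "HOL-Combinatorics.Permutations"
begin

text \<open>Formal power series in the variables X_0, ..., X_(n-1) over a field k,
  represented by their coefficient functions on exponent vectors
  (exponent vectors are functions nat => nat vanishing outside {..<n}).\<close>

type_synonym 'a mps = "(nat \<Rightarrow> nat) \<Rightarrow> 'a"

definition pser :: "nat \<Rightarrow> ('a::zero) mps set" where
  "pser n = {f. \<forall>e. (\<exists>i\<ge>n. e i \<noteq> 0) \<longrightarrow> f e = 0}"

definition ps_add :: "('a::plus) mps \<Rightarrow> 'a mps \<Rightarrow> 'a mps" where
  "ps_add f g = (\<lambda>e. f e + g e)"

definition ps_mult :: "('a::comm_ring_1) mps \<Rightarrow> 'a mps \<Rightarrow> 'a mps" where
  "ps_mult f g = (\<lambda>e. \<Sum>d\<in>{d. \<forall>i. d i \<le> e i}. f d * g (\<lambda>i. e i - d i))"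

definition ps_const :: "'a::zero \<Rightarrow> 'a mps" where
  "ps_const c = (\<lambda>e. if e = (\<lambda>_. 0) then c else 0)"

definition ps_monom :: "(nat \<Rightarrow> nat) \<Rightarrow> ('a::{zero,one}) mps" where
  "ps_monom d = (\<lambda>e. if e = d then 1 else 0)"

definition ps_X :: "nat \<Rightarrow> ('a::{zero,one}) mps" where
  "ps_X i = ps_monom (\<lambda>j. if j = i then 1 else 0)"

text \<open>A discrete (rank one) valuation of K_n = Frac(R_n) over k, with value group Z
  and center M_n in R_n. It is given by its (unique-determining) restriction v to
  R_n - {0}; its value on a fraction f/g is v f - v g.\<close>
definition disc_val :: "nat \<Rightarrow> (('a::field) mps \<Rightarrow> int) \<Rightarrow> bool" where
  "disc_val n v \<longleftrightarrow>
     (\<forall>f\<in>pser n. \<forall>g\<in>pser n. f \<noteq> (\<lambda>_. 0) \<longrightarrow> g \<noteq> (\<lambda>_. 0) \<longrightarrow>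
         v (ps_mult f g) = v f + v g) \<and>
     (\<forall>f\<in>pser n. \<forall>g\<in>pser n. f \<noteq> (\<lambda>_. 0) \<longrightarrow> g \<noteq> (\<lambda>_. 0) \<longrightarrow> ps_add f g \<noteq> (\<lambda>_. 0) \<longrightarrow>
         v (ps_add f g) \<ge> min (v f) (v g)) \<and>
     (\<forall>c. c \<noteq> 0 \<longrightarrow> v (ps_const c) = 0) \<and>
     (\<forall>f\<in>pser n. f \<noteq> (\<lambda>_. 0) \<longrightarrow> v f \<ge> 0) \<and>
     (\<forall>f\<in>pser n. f \<noteq> (\<lambda>_. 0) \<longrightarrow> f (\<lambda>_. 0) = 0 \<longrightarrow> v f > 0) \<and>
     {v f - v g | f g. f \<in> pser n \<and> g \<in> pser n \<and> f \<noteq> (\<lambda>_. 0) \<and> g \<noteq> (\<lambda>_. 0)} = UNIV"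

text \<open>Every variable produced by monoidal transformations is a Laurent monomial
  X^e = X^(e+) / X^(e-) in the original variables (e :: nat => int). Its value under
  the extension of v to K_n (and to the completion).\<close>
definition lval :: "(('a::field) mps \<Rightarrow> int) \<Rightarrow> (nat \<Rightarrow> int) \<Rightarrow> int" where
  "lval v e = v (ps_monom (\<lambda>i. nat (e i))) - v (ps_monom (\<lambda>i. nat (- e i)))"

text \<open>A system is given by E, where the i-th variable
  (i < n) is the Laurent monomial X^(E i). A monoidal transformation with respect to
  the pair (i, j) (with value of Y_j > value of Y_i) replaces Y_j by Y_j / Y_i.\<close>
inductive_set reachable_vars ::
    "nat \<Rightarrow> (('a::field) mps \<Rightarrow> int) \<Rightarrow> (nat \<Rightarrow> nat \<Rightarrow> int) set"
  for n :: nat and v :: "'a mps \<Rightarrow> int" where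
  init: "(\<lambda>i j. if i = j \<and> i < n then 1 else 0) \<in> reachable_vars n v"
| monoidal: "E \<in> reachable_vars n v \<Longrightarrow> i < n \<Longrightarrow> j < n \<Longrightarrow> i \<noteq> j \<Longrightarrow>
      lval v (E j) > lval v (E i) \<Longrightarrow>
      E(j := (\<lambda>l. E j l - E i l)) \<in> reachable_vars n v"
| permute: "E \<in> reachable_vars n v \<Longrightarrow> \<sigma> permutes {..<n} \<Longrightarrow>
      (E \<circ> \<sigma>) \<in> reachable_vars n v"

end

theory Submission
  imports Defs
begin

text \<open>Since \<open>v\<close> is additive on products, the value of a Laurent monomial \<open>X^e\<close> is the
  linear form \<open>\<Sum>i. e i * \<alpha> i\<close>. A monoidal transformation replacing \<open>Y\<^sub>j\<close> by
  \<open>Y\<^sub>j / Y\<^sub>i\<close> when \<open>v Y\<^sub>i < v Y\<^sub>j\<close> therefore performs one step of the subtractive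
  Euclidean algorithm on the vector of values: the values stay positive, their gcd is
  unchanged and their sum decreases. When no step is possible all values are equal,
  hence equal to their gcd \<open>\<alpha>\<close>.\<close>

lemma Gcd_image_fun_upd_diff:
  fixes f :: "'b \<Rightarrow> 'a::{semiring_Gcd, comm_ring_1}"
  assumes "i \<in> A" "j \<in> A" "i \<noteq> j"
  shows "Gcd (f(j := f j - f i) ` A) = Gcd (f ` A)"
proof (rule Gcd_eqI)
  show "Gcd (f ` A) dvd b" if "b \<in> f(j := f j - f i) ` A" for b
    using that assms by (auto intro: dvd_diff Gcd_dvd)
  show "c dvd Gcd (f ` A)" if common: "\<And>b. b \<in> f(j := f j - f i) ` A \<Longrightarrow> c dvd b" for c
  proof (rule Gcd_greatest, clarify)
    fix l assume "l \<in> A"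
    have "c dvd f i" "c dvd f j - f i"
      using common[of "f i"] common[of "f j - f i"] assms by (force simp: image_iff)+
    then have "c dvd f j" using dvd_add by fastforce
    then show "c dvd f l" using common[of "f l"] \<open>l \<in> A\<close> by (cases "l = j") (auto simp: image_iff)
  qed
qed simp

lemma subtractive_euclid_Gcd:
  fixes a :: "'b \<Rightarrow> int"
  assumes "finite A" "A \<noteq> {}"
    and "P a" "\<forall>i\<in>A. a i > 0"
    and step: "\<And>a i j. P a \<Longrightarrow> i \<in> A \<Longrightarrow> j \<in> A \<Longrightarrow> a i < a j \<Longrightarrow> P (a(j := a j - a i))"
  shows "\<exists>b. P b \<and> (\<forall>i\<in>A. b i = Gcd (a ` A))"
  using assms(3,4)
proof (induction "nat (\<Sum>i\<in>A. a i)" arbitrary: a rule: less_induct)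
  case less
  show ?case
  proof (cases "\<exists>i\<in>A. \<exists>j\<in>A. a i < a j")
    case False
    obtain k where "k \<in> A" using \<open>A \<noteq> {}\<close> by blast
    with False have "a ` A = {a k}" by (auto simp: image_iff) (metis linorder_neqE)
    then show ?thesis using less.prems \<open>k \<in> A\<close> by force
  next
    case True
    then obtain i j where ij: "i \<in> A" "j \<in> A" "a i < a j" by blast
    define a' where "a' = a(j := a j - a i)"
    have pos': "\<forall>l\<in>A. a' l > 0" using less.prems(2) ij by (simp add: a'_def)
    have "(\<Sum>l\<in>A. a' l) = (\<Sum>l\<in>A. a l) - a i"
    proof -
      have "(\<Sum>l\<in>A. a' l) = (\<Sum>l\<in>A. a l - (if l = j then a i else 0))"
        by (rule sum.cong) (auto simp: a'_def)
      then show ?thesis using ij \<open>finite A\<close> by (simp add: sum_subtractf)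
    qed
    moreover have "(\<Sum>l\<in>A. a' l) > 0" using pos' ij \<open>finite A\<close> by (intro sum_pos) auto
    ultimately have "nat (\<Sum>l\<in>A. a' l) < nat (\<Sum>l\<in>A. a l)"
      using less.prems(2) ij by auto
    moreover have "P a'" unfolding a'_def using step less.prems(1) ij by blast
    ultimately obtain b where "P b" "\<forall>l\<in>A. b l = Gcd (a' ` A)"
      using less.hyps pos' by blast
    moreover have "Gcd (a' ` A) = Gcd (a ` A)"
      unfolding a'_def using ij by (intro Gcd_image_fun_upd_diff) auto
    ultimately show ?thesis by auto
  qed
qed

lemma finite_pointwise_le:
  assumes "\<forall>i\<ge>n. e i = 0"
  shows "finite {d :: nat \<Rightarrow> nat. \<forall>i. d i \<le> e i}"
proof (rule finite_subset)
  let ?B = "{..(\<Sum>i<n. e i)}"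
  show "{d. \<forall>i. d i \<le> e i} \<subseteq> {d. \<forall>i. (i \<in> {..<n} \<longrightarrow> d i \<in> ?B) \<and> (i \<notin> {..<n} \<longrightarrow> d i = 0)}"
  proof clarify
    fix d i assume d: "\<forall>i. d i \<le> e i"
    have "e i \<le> (\<Sum>i<n. e i)" if "i < n" using that by (intro member_le_sum) auto
    then show "(i \<in> {..<n} \<longrightarrow> d i \<in> ?B) \<and> (i \<notin> {..<n} \<longrightarrow> d i = 0)"
      using d[rule_format, of i] assms by (auto intro: order_trans)
  qed
  show "finite {d. \<forall>i. (i \<in> {..<n} \<longrightarrow> d i \<in> ?B) \<and> (i \<notin> {..<n} \<longrightarrow> d i = (0::nat))}"
    by (rule finite_set_of_finite_funs) auto
qed

lemma ps_mult_ps_monom: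
  assumes "\<forall>i\<ge>n. a i = 0" "\<forall>i\<ge>n. b i = 0"
  shows "ps_mult (ps_monom a) (ps_monom b) = (ps_monom (\<lambda>i. a i + b i) :: 'a::comm_ring_1 mps)"
proof
  fix e :: "nat \<Rightarrow> nat"
  let ?S = "{d. \<forall>i. d i \<le> e i}"
  have "ps_mult (ps_monom a) (ps_monom b) e
      = (\<Sum>d\<in>?S. if d = a then ps_monom b (\<lambda>i. e i - a i) else (0::'a))"
    unfolding ps_mult_def by (rule sum.cong) (auto simp: ps_monom_def)
  also have "\<dots> = ps_monom (\<lambda>i. a i + b i) e"
  proof (cases "finite ?S")
    case True
    have "(a \<in> ?S \<and> (\<lambda>i. e i - a i) = b) \<longleftrightarrow> e = (\<lambda>i. a i + b i)"
      by (auto simp: fun_eq_iff) (metis add_diff_inverse_nat less_le_not_le not_le)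
    with True show ?thesis by (auto simp: ps_monom_def)
  next
    case False
    then have "e \<noteq> (\<lambda>i. a i + b i)" using finite_pointwise_le[of n] assms by auto
    with False show ?thesis by (simp add: ps_monom_def)
  qed
  finally show "ps_mult (ps_monom a) (ps_monom b) e = (ps_monom (\<lambda>i. a i + b i) e :: 'a)" .
qed

lemma ps_monom_in_pser: "\<forall>i\<ge>n. d i = 0 \<Longrightarrow> ps_monom d \<in> pser n"
  by (auto simp: pser_def ps_monom_def)

lemma ps_monom_neq_zero: "ps_monom d \<noteq> (\<lambda>_. 0 :: 'a::zero_neq_one)"
  by (auto simp: ps_monom_def dest: fun_cong[where x = d])

lemma disc_val_ps_monom_add:
  fixes v :: "'a::field mps \<Rightarrow> int"
  assumes "disc_val n v" "\<forall>i\<ge>n. a i = 0" "\<forall>i\<ge>n. b i = 0"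
  shows "v (ps_monom (\<lambda>i. a i + b i)) = v (ps_monom a) + v (ps_monom b)"
proof -
  have mult: "v (ps_mult f g) = v f + v g"
    if "f \<in> pser n" "g \<in> pser n" "f \<noteq> (\<lambda>_. 0)" "g \<noteq> (\<lambda>_. 0)" for f g
    using assms(1) that unfolding disc_val_def by blast
  have "v (ps_monom (\<lambda>i. a i + b i)) = v (ps_mult (ps_monom a) (ps_monom b))"
    unfolding ps_mult_ps_monom[OF assms(2,3)] ..
  then show ?thesis
    using mult[OF ps_monom_in_pser[OF assms(2)] ps_monom_in_pser[OF assms(3)]
        ps_monom_neq_zero ps_monom_neq_zero] by simp
qed

lemma disc_val_ps_monom:
  fixes v :: "'a::field mps \<Rightarrow> int"
  assumes v: "disc_val n v" and d: "\<forall>i\<ge>n. d i = 0"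
  shows "v (ps_monom d) = (\<Sum>i<n. int (d i) * v (ps_X i))"
  using d
proof (induction "\<Sum>i<n. d i" arbitrary: d)
  case 0
  then have "d = (\<lambda>_. 0)" by (auto simp: fun_eq_iff) (metis lessThan_iff not_less)
  then have "ps_monom d = (ps_const 1 :: 'a mps)" by (auto simp: ps_monom_def ps_const_def)
  with v \<open>d = _\<close> show ?case by (simp add: disc_val_def)
next
  case (Suc k)
  then obtain i where i: "i < n" "d i > 0"
    by (metis gr0I sum_eq_0_iff finite_lessThan lessThan_iff nat.distinct(1))
  define unit where "unit = (\<lambda>l. if l = i then 1 else 0 :: nat)"
  define d' where "d' = d(i := d i - 1)"
  have d': "\<forall>l\<ge>n. d' l = 0" and unit: "\<forall>l\<ge>n. unit l = 0"
    using Suc.prems i by (auto simp: d'_def unit_def)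
  have split: "d = (\<lambda>l. d' l + unit l)" using i by (auto simp: d'_def unit_def)
  then have "Suc k = (\<Sum>l<n. d' l) + 1"
    using Suc.hyps(2) i by (simp add: sum.distrib unit_def)
  then have IH: "v (ps_monom d') = (\<Sum>l<n. int (d' l) * v (ps_X l))"
    using Suc.hyps(1) d' by simp
  have "v (ps_monom d) = v (ps_monom d') + v (ps_X i)"
    using disc_val_ps_monom_add[OF v d' unit] split by (simp add: ps_X_def unit_def)
  also have "\<dots> = (\<Sum>l<n. int (d' l) * v (ps_X l) + (if l = i then v (ps_X l) else 0))"
    using i IH by (simp add: sum.distrib)
  also have "\<dots> = (\<Sum>l<n. int (d l) * v (ps_X l))"
    by (rule sum.cong) (use i in \<open>auto simp: d'_def algebra_simps of_nat_diff Suc_le_eq\<close>)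
  finally show ?case .
qed

lemma lval_eq_sum:
  fixes v :: "'a::field mps \<Rightarrow> int"
  assumes "disc_val n v" "\<forall>l\<ge>n. e l = 0"
  shows "lval v e = (\<Sum>l<n. e l * v (ps_X l))"
proof -
  have "lval v e = (\<Sum>l<n. (int (nat (e l)) - int (nat (- e l))) * v (ps_X l))"
    using assms by (simp add: lval_def disc_val_ps_monom sum_subtractf left_diff_distrib)
  also have "\<dots> = (\<Sum>l<n. e l * v (ps_X l))"
    by (rule sum.cong) auto
  finally show ?thesis .
qed

lemma lval_diff:
  fixes v :: "'a::field mps \<Rightarrow> int"
  assumes "disc_val n v" "\<forall>l\<ge>n. e l = 0" "\<forall>l\<ge>n. e' l = 0"
  shows "lval v (\<lambda>l. e l - e' l) = lval v e - lval v e'"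
  using assms by (simp add: lval_eq_sum left_diff_distrib sum_subtractf)

lemma disc_val_ps_X_pos:
  assumes "disc_val n v" "i < n"
  shows "v (ps_X i) > 0"
proof -
  have "ps_X i \<in> pser n" "ps_X i (\<lambda>_. 0) = 0"
    using \<open>i < n\<close> by (auto simp: ps_X_def ps_monom_def pser_def dest: fun_cong[where x = i])
  then show ?thesis
    using assms(1) ps_monom_neq_zero unfolding disc_val_def ps_X_def by blast
qed

lemma reachable_vars_support: "E \<in> reachable_vars n v \<Longrightarrow> l \<ge> n \<Longrightarrow> E i l = 0"
  by (induction arbitrary: i rule: reachable_vars.induct) auto

lemma reachable_vars_init_lval:
  assumes "disc_val n v"
  shows "\<exists>E\<in>reachable_vars n v. \<forall>i<n. lval v (E i) = v (ps_X i)"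
proof (intro bexI[of _ "\<lambda>i j. if i = j \<and> i < n then 1 else 0"] allI impI)
  fix i assume "i < n"
  have "lval v (\<lambda>j. if i = j \<and> i < n then 1 else 0)
      = (\<Sum>l<n. (if i = l \<and> i < n then 1 else 0) * v (ps_X l))"
    using assms by (rule lval_eq_sum) simp
  also have "\<dots> = (\<Sum>l<n. if l = i then v (ps_X i) else 0)"
    by (rule sum.cong) auto
  finally show "lval v (\<lambda>j. if i = j \<and> i < n then 1 else 0) = v (ps_X i)"
    using \<open>i < n\<close> by simp
qed (rule reachable_vars.init)

lemma reachable_vars_monoidal_lval:
  fixes v :: "'a::field mps \<Rightarrow> int"
  assumes v: "disc_val n v" and E: "E \<in> reachable_vars n v" "\<forall>l<n. lval v (E l) = a l"
    and "i < n" "j < n" "a i < a j"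
  shows "\<exists>E'\<in>reachable_vars n v. \<forall>l<n. lval v (E' l) = (a(j := a j - a i)) l"
proof
  let ?E' = "E(j := (\<lambda>l. E j l - E i l))"
  show "?E' \<in> reachable_vars n v"
    using assms by (intro reachable_vars.monoidal) auto
  show "\<forall>l<n. lval v (?E' l) = (a(j := a j - a i)) l"
    using lval_diff[OF v] reachable_vars_support[OF E(1)] assms(3-5) by simp
qed

theorem lemma2:
  fixes n :: nat and v :: "('a::field_char_0) mps \<Rightarrow> int"
  assumes "n \<ge> 2"
    and "disc_val n v"
  shows "\<exists>E\<in>reachable_vars n v.
           \<forall>i<n. lval v (E i) = Gcd ((\<lambda>i. v (ps_X i)) ` {..<n})"
proof -
  let ?P = "\<lambda>a. \<exists>E\<in>reachable_vars n v. \<forall>l<n. lval v (E l) = a l"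
  have "\<exists>b. ?P b \<and> (\<forall>i\<in>{..<n}. b i = Gcd ((\<lambda>i. v (ps_X i)) ` {..<n}))"
  proof (rule subtractive_euclid_Gcd)
    show "{..<n} \<noteq> {}" using assms(1) by (simp add: lessThan_empty_iff)
    show "?P (\<lambda>i. v (ps_X i))" using reachable_vars_init_lval[OF assms(2)] .
    show "\<forall>i\<in>{..<n}. v (ps_X i) > 0" using disc_val_ps_X_pos[OF assms(2)] by blast
    show "?P (a(j := a j - a i))" if "?P a" "i \<in> {..<n}" "j \<in> {..<n}" "a i < a j" for a i j
      using that reachable_vars_monoidal_lval[OF assms(2)] by (metis lessThan_iff)
  qed simp
  then show ?thesis by (metis lessThan_iff)
qed

end
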